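(* Let $\Box$ be an axis-parallel square of side length $1/2$, $l$ the line containing its top edge, $H$ the open halfplane above $l$, and $u_1,\dots,u_N$ points in $\Box$. Define subdivisions $\varPhi_0,\dots,\varPhi_N$ of $H$: $\varPhi_0$ has the single face $F_0=H$ (its outer face); given $\varPhi_{i-1}$ with outer face $F_{i-1}=H\setminus\bigcup_{j<i}\odot_{u_j}$, obtain $\varPhi_i$ by splitting $F_{i-1}$ into the face $F_i=F_{i-1}\setminus\odot_{u_i}$ (the new outer face) and the connected components of $F_{i-1}\cap\odot_{u_i}$, each of which is labeled $i$; all other faces are kept. Let $\varPhi=\varPhi_N$. Then $\varPhi$ has complexity $O(N)$, and for each $i\in\{1,\dots,N\}$, $\varPhi$ has at most one face labeled $i$.
   Context: $\odot_a$ denotes the closed disk of radius 1 centered at $a$ (Euclidean norm). *)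

theory Defs
  imports "HOL-Analysis.Analysis"
begin

text \<open>Points of the plane are pairs of reals; the norm on real \<times> real is Euclidean,
  so the closed unit disk centred at a is cball a 1.
  The square is {a..a+1/2} \<times> {b..b+1/2}; its top edge lies on the line y = b + 1/2.\<close>

definition sq :: "real \<Rightarrow> real \<Rightarrow> (real \<times> real) set" where
  "sq a b = {p. a \<le> fst p \<and> fst p \<le> a + 1/2 \<and> b \<le> snd p \<and> snd p \<le> b + 1/2}"

definition topline :: "real \<Rightarrow> (real \<times> real) set" where
  "topline t = {p. snd p = t}"

definition halfplane :: "real \<Rightarrow> (real \<times> real) set" where
  "halfplane t = {p. snd p > t}"

definition outer_face :: "real \<Rightarrow> (nat \<Rightarrow> real \<times> real) \<Rightarrow> nat \<Rightarrow> (real \<times> real) set" where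
  "outer_face t u i = halfplane t - (\<Union>j\<in>{1..i}. cball (u j) 1)"

definition labeled_faces :: "real \<Rightarrow> (nat \<Rightarrow> real \<times> real) \<Rightarrow> nat \<Rightarrow> (real \<times> real) set set" where
  "labeled_faces t u i = components (outer_face t u (i - 1) \<inter> cball (u i) 1)"

definition faces :: "real \<Rightarrow> (nat \<Rightarrow> real \<times> real) \<Rightarrow> nat \<Rightarrow> (real \<times> real) set set" where
  "faces t u N = insert (outer_face t u N) (\<Union>i\<in>{1..N}. labeled_faces t u i)"

definition curves :: "real \<Rightarrow> (nat \<Rightarrow> real \<times> real) \<Rightarrow> nat \<Rightarrow> (real \<times> real) set set" where
  "curves t u N = insert (topline t) ((\<lambda>j. sphere (u j) 1) ` {1..N})"

definition skeleton :: "real \<Rightarrow> (nat \<Rightarrow> real \<times> real) \<Rightarrow> nat \<Rightarrow> (real \<times> real) set" where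
  "skeleton t u N = (\<Union>F\<in>faces t u N. frontier F)"

text \<open>Vertices: points of the skeleton near which the skeleton is not locally a single
  one of the curves (crossings, tangencies, endpoints of arcs).\<close>
definition vertices :: "real \<Rightarrow> (nat \<Rightarrow> real \<times> real) \<Rightarrow> nat \<Rightarrow> (real \<times> real) set" where
  "vertices t u N = {p \<in> skeleton t u N. \<not> (\<exists>e>0. \<exists>C\<in>curves t u N.
      skeleton t u N \<inter> ball p e = C \<inter> ball p e)}"

definition edges :: "real \<Rightarrow> (nat \<Rightarrow> real \<times> real) \<Rightarrow> nat \<Rightarrow> (real \<times> real) set set" where
  "edges t u N = components (skeleton t u N - vertices t u N)"

definition complexity :: "real \<Rightarrow> (nat \<Rightarrow> real \<times> real) \<Rightarrow> nat \<Rightarrow> nat" where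
  "complexity t u N = card (faces t u N) + card (vertices t u N) + card (edges t u N)"

end

(*
  Above the line y = t, the unit disk about a centre below the line is the region under an upper
  arc of its circle. Hence the outer face F_k is the region above the upper envelope of the first
  k arcs (and of the line), and F_(i-1) meets the disk of u_i in the region between the (i-1)-th
  and the i-th envelope, lying over the set of abscissae where the i-th arc shows above the
  earlier envelope. Because all centres lie in a square of side 1/2, the abscissae where one arc
  is above the line and above another arc form an interval: this is a concavity argument for
  the semicircle sqrt (1 - x^2). So the region is connected, and it is the only face labeled i.

  The skeleton is the union of the graphs of the envelopes. Near a point other than the 2N
  points above the ends of these intervals, it coincides with a single graph, which there is
  the line or one circle; so there are at most 2N vertices. Cutting the new part of each
  envelope at the vertices gives at most |V| + N + 1 connected pieces covering the edges, and
  there are at most N + 1 faces, so the complexity is at most 6N + 2.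
*)

theory Submission
  imports Defs
begin


section \<open>The unit semicircle\<close>

lemma concave_on_sqrt_one_minus_square: "concave_on {-1..1} (\<lambda>x::real. sqrt (1 - x\<^sup>2))"
proof (rule concave_on_linorderI)
  fix l X Y :: real
  assume l: "0 < l" "l < 1" and X: "X \<in> {-1..1}" and Y: "Y \<in> {-1..1}"
  define s where "s = sqrt (1 - X\<^sup>2)"
  define r where "r = sqrt (1 - Y\<^sup>2)"
  have "X\<^sup>2 \<le> 1" "Y\<^sup>2 \<le> 1" using X Y by (auto simp: abs_square_le_1)
  then have s: "0 \<le> s" "s\<^sup>2 = 1 - X\<^sup>2" and r: "0 \<le> r" "r\<^sup>2 = 1 - Y\<^sup>2"
    by (auto simp: s_def r_def)
  \<comment> \<open>Cauchy-Schwarz for the unit vectors (X, s) and (Y, r)\<close>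
  have "(X - Y)\<^sup>2 + (s - r)\<^sup>2 = 2 - 2 * (X * Y + s * r)"
    using s r by (simp add: power2_diff algebra_simps)
  then have "X * Y + s * r \<le> 1"
    using sum_squares_ge_zero[of "X - Y" "s - r"] by (simp add: power2_eq_square)
  then have cs: "2 * l * (1 - l) * (X * Y + s * r) \<le> 2 * l * (1 - l)"
    using l by (simp add: mult_left_le)
  have "((1 - l) * s + l * r)\<^sup>2 + ((1 - l) * X + l * Y)\<^sup>2
      = (1 - l)\<^sup>2 * (s\<^sup>2 + X\<^sup>2) + l\<^sup>2 * (r\<^sup>2 + Y\<^sup>2) + 2 * l * (1 - l) * (X * Y + s * r)"
    by algebra
  also have "\<dots> \<le> (1 - l)\<^sup>2 + l\<^sup>2 + 2 * l * (1 - l)"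
    using s r cs by simp
  also have "\<dots> = 1" by algebra
  finally have "((1 - l) * s + l * r)\<^sup>2 + ((1 - l) * X + l * Y)\<^sup>2 \<le> 1" .
  then have "(1 - l) * s + l * r \<le> sqrt (1 - ((1 - l) * X + l * Y)\<^sup>2)"
    by (intro real_le_rsqrt) simp
  then show "(1 - l) * s + l * r \<le> sqrt (1 - ((1 - l) *\<^sub>R X + l *\<^sub>R Y)\<^sup>2)"
    by simp
qed (rule convex_real_interval)

lemma convex_on_linear_plus_semicircle:
  fixes a b :: real
  assumes "b \<le> 0"
  shows "convex_on {-1..1} (\<lambda>x. a * x + b * sqrt (1 - x\<^sup>2))"
proof -
  have linear: "convex_on {-1..1} (\<lambda>x. a * x)" by (auto simp: convex_on_def algebra_simps)
  have "convex_on {-1..1} (\<lambda>x. a * x + (- b) * (- sqrt (1 - x\<^sup>2)))"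
    using concave_on_sqrt_one_minus_square assms unfolding concave_on_def
    by (intro convex_on_add[OF linear] convex_on_cmul) auto
  then show ?thesis by simp
qed

lemma concave_on_linear_plus_semicircle:
  fixes a b :: real
  assumes "0 \<le> b"
  shows "concave_on {-1..1} (\<lambda>x. a * x + b * sqrt (1 - x\<^sup>2))"
proof (rule concave_on_add)
  show "concave_on {-1..1} (\<lambda>x. a * x)" by (auto simp: concave_on_iff algebra_simps)
qed (rule concave_on_cmul[OF assms concave_on_sqrt_one_minus_square])

lemma half_le_sqrt_one_minus_square:
  assumes "\<bar>h\<bar> \<le> 1/2"
  shows "1/2 \<le> sqrt (1 - h\<^sup>2)"
proof (rule real_le_rsqrt)
  have "\<bar>h\<bar>\<^sup>2 \<le> (1/2)\<^sup>2" using assms by (intro power_mono) auto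
  then show "(1/2)\<^sup>2 \<le> 1 - h\<^sup>2" by (simp add: power2_eq_square)
qed

text \<open>For \<open>b \<ge> 0\<close> the function \<open>a * X + b * sqrt (1 - X\<^sup>2)\<close> is concave, and at the end
  \<open>X = \<plusminus>sqrt (1 - h\<^sup>2)\<close> on the side of \<open>a\<close> it is at least \<open>(a\<^sup>2 + b\<^sup>2) / 2\<close>. So this level,
  once reached at \<open>X2\<close>, is kept between \<open>X2\<close> and that end.\<close>
lemma semicircle_level_spreads:
  fixes a b h :: real
  assumes h: "0 \<le> h" "h \<le> 1/2" and a: "\<bar>a\<bar> \<le> 1/2" and b: "0 \<le> b" "b \<le> h"
    and X: "- sqrt (1 - h\<^sup>2) < X1" "X1 \<le> X2" "X2 \<le> X3" "X3 < sqrt (1 - h\<^sup>2)"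
    and level: "a\<^sup>2 + b\<^sup>2 \<le> 2 * (a * X2 + b * sqrt (1 - X2\<^sup>2))"
  shows "a\<^sup>2 + b\<^sup>2 \<le> 2 * (a * X1 + b * sqrt (1 - X1\<^sup>2)) \<or>
    a\<^sup>2 + b\<^sup>2 \<le> 2 * (a * X3 + b * sqrt (1 - X3\<^sup>2))"
proof -
  define W where "W = sqrt (1 - h\<^sup>2)"
  define \<phi> where "\<phi> = (\<lambda>X. a * X + b * sqrt (1 - X\<^sup>2))"
  have "h\<^sup>2 \<le> 1" using h by (simp add: abs_square_le_1)
  then have W: "\<bar>a\<bar> \<le> W" "W \<le> 1" "sqrt (1 - W\<^sup>2) = h"
    using h a half_le_sqrt_one_minus_square[of h] by (auto simp: W_def)
  have conc: "concave_on {-1..1} \<phi>"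
    unfolding \<phi>_def using b(1) by (rule concave_on_linear_plus_semicircle)
  have "a * a \<le> \<bar>a\<bar> * W" using mult_left_mono[OF W(1), of "\<bar>a\<bar>"] by simp
  moreover have "b * b \<le> b * h" using b by (intro mult_left_mono) auto
  moreover have "0 \<le> \<bar>a\<bar> * W" "0 \<le> b * h" using W(1) b by auto
  ultimately have "a * a + b * b \<le> 2 * (\<bar>a\<bar> * W + b * h)" by (smt (verit))
  then have end_level: "a\<^sup>2 + b\<^sup>2 \<le> 2 * (\<bar>a\<bar> * W + b * h)" by (simp only: power2_eq_square)
  have X': "- W < X1" "X3 < W" using X(1,4) by (simp_all add: W_def)
  then have "-1 \<le> X2" "X2 \<le> 1" using X(2,3) W(2) by linarith+
  show ?thesis
  proof (cases "0 \<le> a")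
    case True
    have "{X2..W} \<subseteq> {-1..1}" using \<open>-1 \<le> X2\<close> W(2) by auto
    with conc have "concave_on {X2..W} \<phi>"
      unfolding concave_on_def by (rule convex_on_subset) simp
    then have "min (\<phi> X2) (\<phi> W) \<le> \<phi> X3"
      using X(3) X' by (intro concave_on_ge_min) auto
    moreover have "\<phi> W = \<bar>a\<bar> * W + b * h" using True W(3) by (simp add: \<phi>_def)
    ultimately show ?thesis using level end_level by (simp add: \<phi>_def) argo
  next
    case False
    have "{-W..X2} \<subseteq> {-1..1}" using \<open>X2 \<le> 1\<close> W(2) by auto
    with conc have "concave_on {-W..X2} \<phi>"
      unfolding concave_on_def by (rule convex_on_subset) simp
    then have "min (\<phi> (- W)) (\<phi> X2) \<le> \<phi> X1"
      using X(2) X' by (intro concave_on_ge_min) auto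
    moreover have "\<phi> (- W) = \<bar>a\<bar> * W + b * h" using False W(3) by (simp add: \<phi>_def)
    ultimately show ?thesis using level end_level by (simp add: \<phi>_def) argo
  qed
qed

text \<open>In coordinates centred at a point \<open>c\<close> at height \<open>t - h\<close> below the line \<open>y = t\<close>, with
  \<open>(a, b) = c' - c\<close>, this is the set of abscissae at which the unit circle about \<open>c\<close> runs above
  the line and outside the unit disk about \<open>c'\<close>.\<close>
lemma convex_arc_separation:
  fixes a b h :: real
  assumes h: "0 \<le> h" "h \<le> 1/2" and a: "\<bar>a\<bar> \<le> 1/2" and b: "b \<le> h"
  shows "convex {X. \<bar>X\<bar> < sqrt (1 - h\<^sup>2) \<and> 2 * (a * X + b * sqrt (1 - X\<^sup>2)) < a\<^sup>2 + b\<^sup>2}"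
    (is "convex ?S")
proof -
  let ?\<phi> = "\<lambda>X. a * X + b * sqrt (1 - X\<^sup>2)"
  have "is_interval ?S"
    unfolding is_interval_1
  proof (intro ballI allI impI)
    fix X1 X3 X2 assume "X1 \<in> ?S" "X3 \<in> ?S" "X1 \<le> X2 \<and> X2 \<le> X3"
    then have X: "- sqrt (1 - h\<^sup>2) < X1" "X1 \<le> X2" "X2 \<le> X3" "X3 < sqrt (1 - h\<^sup>2)"
      and below: "2 * ?\<phi> X1 < a\<^sup>2 + b\<^sup>2" "2 * ?\<phi> X3 < a\<^sup>2 + b\<^sup>2" by (auto simp: abs_less_iff)
    have "2 * ?\<phi> X2 < a\<^sup>2 + b\<^sup>2"
    proof (cases "b \<le> 0")
      case True
      have "sqrt (1 - h\<^sup>2) \<le> 1" by simp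
      then have "-1 \<le> X1" "X3 \<le> 1" using X by linarith+
      then have "{X1..X3} \<subseteq> {-1..1}" by auto
      with convex_on_linear_plus_semicircle[OF True] have "convex_on {X1..X3} ?\<phi>"
        by (rule convex_on_subset) simp
      then have "?\<phi> X2 \<le> max (?\<phi> X1) (?\<phi> X3)"
        by (rule convex_on_le_max) (use X in simp)
      then show ?thesis using below by argo
    next
      case False
      have "a\<^sup>2 + b\<^sup>2 \<le> 2 * ?\<phi> X2 \<longrightarrow>
          a\<^sup>2 + b\<^sup>2 \<le> 2 * ?\<phi> X1 \<or> a\<^sup>2 + b\<^sup>2 \<le> 2 * ?\<phi> X3"
        using semicircle_level_spreads[of h a b X1 X2 X3] h a b False X by simp
      then show ?thesis using below by argo
    qed
    then show "X2 \<in> ?S" using X by (auto simp: abs_less_iff)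
  qed
  then show ?thesis by (simp add: is_interval_convex_1)
qed

section \<open>Graphs, intervals and components\<close>

lemma frontier_strict_epigraph:
  fixes f :: "real \<Rightarrow> real"
  assumes f: "continuous_on UNIV f"
  shows "frontier {p. f (fst p) < snd p} = {p. snd p = f (fst p)}"
proof -
  let ?A = "{p. f (fst p) < snd p}"
  have cf: "continuous_on UNIV (\<lambda>p::real \<times> real. f (fst p))"
    by (rule continuous_on_compose2[OF f continuous_on_fst[OF continuous_on_id]]) auto
  have "open ?A" by (intro open_Collect_less cf continuous_intros)
  moreover have "closure ?A \<subseteq> {p. f (fst p) \<le> snd p}"
    by (intro closure_minimal closed_Collect_le cf continuous_intros) auto
  moreover have "(x, f x) \<in> closure ?A" for x
    unfolding closure_approachable
  proof (intro allI impI)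
    fix e :: real assume "0 < e"
    then have "(x, f x + e/2) \<in> ?A \<and> dist (x, f x + e/2) (x, f x) < e"
      by (simp add: dist_Pair_Pair dist_real_def)
    then show "\<exists>z\<in>?A. dist z (x, f x) < e" by blast
  qed
  ultimately show ?thesis
    unfolding frontier_def by (auto simp: interior_open)
qed

lemma frontier_region_between_graphs:
  fixes f g :: "real \<Rightarrow> real"
  assumes "continuous_on UNIV f" "continuous_on UNIV g"
  shows "frontier {p. f (fst p) < snd p \<and> snd p \<le> g (fst p)}
           \<subseteq> {p. snd p = f (fst p)} \<union> {p. snd p = g (fst p)}"
proof -
  have "{p. f (fst p) < snd p \<and> snd p \<le> g (fst p)}
      = {p. f (fst p) < snd p} \<inter> - {p. g (fst p) < snd p}"
    by auto
  moreover have "frontier ({p. f (fst p) < snd p} \<inter> - {p. g (fst p) < snd p})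
      \<subseteq> frontier {p. f (fst p) < snd p} \<union> frontier (- {p. g (fst p) < snd p})"
    by (rule frontier_Int_subset)
  ultimately show ?thesis
    by (simp only: frontier_complement frontier_strict_epigraph assms)
qed

lemma lower_graph_in_frontier:
  fixes f g :: "real \<Rightarrow> real"
  assumes "f x < g x"
  shows "(x, f x) \<in> frontier {p. f (fst p) < snd p \<and> snd p \<le> g (fst p)}"
proof -
  let ?A = "{p. f (fst p) < snd p \<and> snd p \<le> g (fst p)}"
  have "(x, f x) \<in> closure ?A"
    unfolding closure_approachable
  proof (intro allI impI)
    fix e :: real assume "0 < e"
    define d where "d = min (e/2) (g x - f x)"
    have "0 < d" "d < e" "d \<le> g x - f x" using \<open>0 < e\<close> assms by (auto simp: d_def)
    then have "(x, f x + d) \<in> ?A \<and> dist (x, f x + d) (x, f x) < e"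
      by (simp add: dist_Pair_Pair dist_real_def)
    then show "\<exists>z\<in>?A. dist z (x, f x) < e" by blast
  qed
  moreover have "(x, f x) \<notin> interior ?A" using interior_subset[of ?A] by auto
  ultimately show ?thesis by (simp add: frontier_def)
qed

lemma connected_region_between_graphs:
  fixes f g :: "real \<Rightarrow> real"
  assumes f: "continuous_on UNIV f" and g: "continuous_on UNIV g" and J: "connected {x. f x < g x}"
  shows "connected {p. f (fst p) < snd p \<and> snd p \<le> g (fst p)}"
proof -
  let ?J = "{x. f x < g x}"
  define h where "h z = (fst z, f (fst z) + snd z * (g (fst z) - f (fst z)))" for z :: "real \<times> real"
  have "{p. f (fst p) < snd p \<and> snd p \<le> g (fst p)} = h ` (?J \<times> {0<..1})"
  proof (intro set_eqI iffI)
    fix p assume p: "p \<in> {p. f (fst p) < snd p \<and> snd p \<le> g (fst p)}"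
    define s where "s = (snd p - f (fst p)) / (g (fst p) - f (fst p))"
    have "0 < g (fst p) - f (fst p)" using p by simp
    then have "0 < s" "s \<le> 1" "h (fst p, s) = p"
      using p by (auto simp: s_def h_def field_simps prod_eq_iff)
    then show "p \<in> h ` (?J \<times> {0<..1})" using p by (intro image_eqI[of _ _ "(fst p, s)"]) auto
  next
    fix p assume "p \<in> h ` (?J \<times> {0<..1})"
    then obtain x s where xs: "f x < g x" "0 < s" "s \<le> 1" and p: "p = h (x, s)" by auto
    have "s * (g x - f x) \<le> g x - f x" using xs by (intro mult_left_le_one_le) auto
    then have "f x + s * (g x - f x) \<le> g x" by linarith
    moreover have "0 < s * (g x - f x)" using xs by simp
    ultimately show "p \<in> {p. f (fst p) < snd p \<and> snd p \<le> g (fst p)}"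
      using p by (simp add: h_def)
  qed
  moreover have "continuous_on (?J \<times> {0<..1}) h"
  proof -
    have "continuous_on (?J \<times> {0<..1}) (\<lambda>z. f (fst z))"
      "continuous_on (?J \<times> {0<..1}) (\<lambda>z. g (fst z))"
      by (auto intro!: continuous_on_compose2[OF f] continuous_on_compose2[OF g] continuous_intros)
    then show ?thesis unfolding h_def by (intro continuous_intros)
  qed
  ultimately show ?thesis
    using J by (metis connected_Times connected_Ioc connected_continuous_image)
qed

lemma graph_image_diff:
  "(\<lambda>x. (x, f x)) ` (D - fst ` (V \<inter> (\<lambda>x. (x, f x)) ` D)) = (\<lambda>x. (x, f x)) ` D - V"
proof (intro equalityI subsetI)
  fix q assume "q \<in> (\<lambda>x. (x, f x)) ` (D - fst ` (V \<inter> (\<lambda>x. (x, f x)) ` D))"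
  then obtain x where "x \<in> D" "x \<notin> fst ` (V \<inter> (\<lambda>x. (x, f x)) ` D)" "q = (x, f x)" by blast
  then show "q \<in> (\<lambda>x. (x, f x)) ` D - V" by (metis DiffI IntI fst_conv image_eqI)
next
  fix q assume "q \<in> (\<lambda>x. (x, f x)) ` D - V"
  then obtain x where x: "x \<in> D" "q = (x, f x)" "q \<notin> V" by blast
  have "x \<notin> fst ` (V \<inter> (\<lambda>x. (x, f x)) ` D)"
  proof
    assume "x \<in> fst ` (V \<inter> (\<lambda>x. (x, f x)) ` D)"
    then obtain y where "(y, f y) \<in> V" "x = y" by auto
    then show False using x by simp
  qed
  then show "q \<in> (\<lambda>x. (x, f x)) ` (D - fst ` (V \<inter> (\<lambda>x. (x, f x)) ` D))" using x by blast
qed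

lemma closure_diff_subset_Inf_Sup:
  fixes S :: "real set"
  assumes "convex S" "bounded S"
  shows "closure S - S \<subseteq> {Inf S, Sup S}"
proof
  fix x assume x: "x \<in> closure S - S"
  then have "S \<noteq> {}" by auto
  have bdd: "bdd_below S" "bdd_above S"
    using assms(2) by (simp_all add: bounded_imp_bdd_below bounded_imp_bdd_above)
  then have "S \<subseteq> {Inf S..Sup S}" by (auto intro: cInf_lower cSup_upper)
  then have "closure S \<subseteq> {Inf S..Sup S}" by (rule closure_minimal) simp
  then have "Inf S \<le> x" "x \<le> Sup S" using x by auto
  moreover have "\<not> (Inf S < x \<and> x < Sup S)"
  proof
    assume "Inf S < x \<and> x < Sup S"
    then obtain y1 y3 where "y1 \<in> S" "y1 \<le> x" "y3 \<in> S" "x \<le> y3"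
      using cInf_less_iff[OF \<open>S \<noteq> {}\<close> bdd(1)] less_cSup_iff[OF \<open>S \<noteq> {}\<close> bdd(2)]
      by (meson less_imp_le)
    moreover have "is_interval S" using assms(1) by (simp add: is_interval_convex_1)
    ultimately have "x \<in> S" unfolding is_interval_1 by blast
    then show False using x by simp
  qed
  ultimately show "x \<in> {Inf S, Sup S}" by auto
qed

lemma convex_diff_finite_cover:
  fixes I X :: "real set"
  assumes I: "convex I" and X: "finite X"
  obtains \<J> where "finite \<J>" "card \<J> \<le> card X + 1" "\<And>J. J \<in> \<J> \<Longrightarrow> convex J" "\<Union>\<J> = I - X"
proof
  define gap where "gap z = I \<inter> {x. x < z \<and> X \<inter> {x..<z} = {}}" for z
  define top where "top = I \<inter> {x. X \<inter> {x..} = {}}"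
  let ?\<J> = "insert top (gap ` X)"
  show "finite ?\<J>" using X by simp
  have "card ?\<J> \<le> card (gap ` X) + 1" using X by (simp add: card_insert_if)
  then show "card ?\<J> \<le> card X + 1" using card_image_le[OF X, of gap] by linarith
  have "is_interval I" using I by (simp add: is_interval_convex_1)
  then have "is_interval J" if "J \<in> ?\<J>" for J
    using that unfolding is_interval_1 gap_def top_def by (auto 4 4)
  then show "convex J" if "J \<in> ?\<J>" for J
    using that by (simp add: is_interval_convex_1)
  show "\<Union>?\<J> = I - X"
  proof (intro equalityI subsetI)
    fix x assume "x \<in> \<Union>?\<J>"
    then show "x \<in> I - X" by (auto simp: gap_def top_def)
  next
    fix x assume x: "x \<in> I - X"
    show "x \<in> \<Union>?\<J>"
    proof (cases "X \<inter> {x..} = {}")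
      case True
      then show ?thesis using x by (simp add: top_def)
    next
      case False
      define z where "z = Min (X \<inter> {x..})"
      have "z \<in> X \<inter> {x..}" unfolding z_def using False X by (intro Min_in) auto
      then have "z \<in> X" "x < z" using x by (auto simp: order_le_less)
      moreover have "z \<le> y" if "y \<in> X \<inter> {x..}" for y
        unfolding z_def using X that by (intro Min_le) auto
      then have "X \<inter> {x..<z} = {}" by fastforce
      ultimately show ?thesis using x by (auto simp: gap_def)
    qed
  qed
qed

lemma card_components_le_cover:
  assumes "finite \<P>" "\<Union>\<P> = S" "\<And>P. P \<in> \<P> \<Longrightarrow> connected P"
  shows "finite (components S) \<and> card (components S) \<le> card \<P>"
proof -
  have "components S \<subseteq> (\<lambda>P. connected_component_set S (SOME x. x \<in> P)) ` \<P>"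
  proof
    fix C assume "C \<in> components S"
    then obtain q where q: "q \<in> S" "C = connected_component_set S q" by (auto simp: components_def)
    then obtain P where P: "P \<in> \<P>" "q \<in> P" using assms(2) by blast
    then have "P \<subseteq> connected_component_set S q"
      using assms by (intro connected_component_maximal) auto
    moreover from P(2) have "(SOME x. x \<in> P) \<in> P" by (rule someI)
    ultimately have "C = connected_component_set S (SOME x. x \<in> P)"
      using q connected_component_eq by blast
    then show "C \<in> (\<lambda>P. connected_component_set S (SOME x. x \<in> P)) ` \<P>" using P by blast
  qed
  then show ?thesis
    using assms(1) by (meson card_image_le finite_imageI finite_subset card_mono le_trans)
qed

lemma eventually_nhds_mem_iff_imp_ball:
  assumes "\<forall>\<^sub>F q in nhds p. q \<in> A \<longleftrightarrow> q \<in> B"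
  shows "\<exists>e>0. A \<inter> ball p e = B \<inter> ball p e"
proof -
  obtain e where "e > 0" "\<And>q. dist q p < e \<Longrightarrow> q \<in> A \<longleftrightarrow> q \<in> B"
    using assms unfolding eventually_nhds_metric by blast
  then show ?thesis by (intro exI[of _ e]) (auto simp: dist_commute)
qed

lemma eventually_nhds_fst:
  "\<forall>\<^sub>F x in nhds (fst p). P x \<Longrightarrow> \<forall>\<^sub>F q in nhds p. P (fst q)"
  by (rule eventually_compose_filterlim[OF _ tendsto_fst[OF filterlim_ident]])

lemma eq_if_eq_prev:
  fixes f :: "nat \<Rightarrow> 'a"
  assumes "m \<le> k" "\<And>j. m < j \<Longrightarrow> j \<le> k \<Longrightarrow> f j = f (j - 1)"
  shows "f k = f m"
  using assms by (induction k rule: dec_induct) auto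

section \<open>Upper arcs and their envelopes\<close>

text \<open>Above the line \<open>y = t\<close>, the unit disk about a centre \<open>c\<close> below the line is the region
  under the graph of \<open>upper_arc t c\<close>. Where \<open>\<bar>x - fst c\<bar> > 1\<close> the radicand is negative, and so
  is its \<open>sqrt\<close>; the maximum is then \<open>t\<close>.\<close>
definition upper_arc :: "real \<Rightarrow> real \<times> real \<Rightarrow> real \<Rightarrow> real" where
  "upper_arc t c x = max t (snd c + sqrt (1 - (x - fst c)\<^sup>2))"

lemma continuous_on_upper_arc [continuous_intros]:
  "continuous_on S f \<Longrightarrow> continuous_on S (\<lambda>x. upper_arc t c (f x))"
  unfolding upper_arc_def by (intro continuous_intros)

lemma upper_arc_gt_iff:
  assumes "snd c \<le> t"
  shows "t < upper_arc t c x \<longleftrightarrow> \<bar>x - fst c\<bar> < sqrt (1 - (t - snd c)\<^sup>2)"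
proof -
  have "t < upper_arc t c x \<longleftrightarrow> sqrt ((t - snd c)\<^sup>2) < sqrt (1 - (x - fst c)\<^sup>2)"
    using assms by (auto simp: upper_arc_def less_max_iff_disj)
  also have "\<dots> \<longleftrightarrow> sqrt ((x - fst c)\<^sup>2) < sqrt (1 - (t - snd c)\<^sup>2)"
    by (simp only: real_sqrt_less_iff) argo
  finally show ?thesis by simp
qed

lemma mem_cball_iff_le_upper_arc:
  assumes "snd c \<le> t" "t < y"
  shows "(x, y) \<in> cball c 1 \<longleftrightarrow> y \<le> upper_arc t c x"
proof -
  have "(x, y) \<in> cball c 1 \<longleftrightarrow> (y - snd c)\<^sup>2 \<le> 1 - (x - fst c)\<^sup>2"
    by (cases c) (simp add: dist_Pair_Pair dist_real_def power2_commute algebra_simps)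
  also have "\<dots> \<longleftrightarrow> sqrt ((y - snd c)\<^sup>2) \<le> sqrt (1 - (x - fst c)\<^sup>2)"
    by (simp only: real_sqrt_le_iff)
  also have "\<dots> \<longleftrightarrow> y \<le> upper_arc t c x"
    using assms by (auto simp: upper_arc_def)
  finally show ?thesis .
qed

lemma mem_sphere_iff_eq_upper_arc:
  assumes "snd c \<le> t" "t < y"
  shows "(x, y) \<in> sphere c 1 \<longleftrightarrow> y = upper_arc t c x"
proof -
  have "(x, y) \<in> sphere c 1 \<longleftrightarrow> (y - snd c)\<^sup>2 = 1 - (x - fst c)\<^sup>2"
    by (cases c) (simp add: dist_Pair_Pair dist_real_def power2_commute algebra_simps)
  also have "\<dots> \<longleftrightarrow> sqrt ((y - snd c)\<^sup>2) = sqrt (1 - (x - fst c)\<^sup>2)"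
    by (simp only: real_sqrt_eq_iff)
  also have "\<dots> \<longleftrightarrow> y = upper_arc t c x"
    using assms by (auto simp: upper_arc_def)
  finally show ?thesis .
qed

text \<open>Where the arc of \<open>c\<close> lies above the line, the arc of \<open>c'\<close> lies below it exactly when the
  point of the circle about \<open>c\<close> lies outside the disk about \<open>c'\<close>.\<close>
lemma upper_arc_less_upper_arc_iff:
  assumes c: "snd c \<le> t" and c': "snd c' \<le> t" and above: "t < upper_arc t c x"
  shows "upper_arc t c' x < upper_arc t c x \<longleftrightarrow>
    2 * ((fst c' - fst c) * (x - fst c) + (snd c' - snd c) * sqrt (1 - (x - fst c)\<^sup>2))
      < (fst c' - fst c)\<^sup>2 + (snd c' - snd c)\<^sup>2"
proof -
  define X where "X = x - fst c"
  define s where "s = sqrt (1 - X\<^sup>2)"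
  define y where "y = upper_arc t c x"
  have y: "y = snd c + s" using above by (simp add: y_def s_def X_def upper_arc_def)
  have "(x, y) \<in> sphere c 1" using mem_sphere_iff_eq_upper_arc[OF c] above by (simp add: y_def)
  then have circle: "X\<^sup>2 + s\<^sup>2 = 1"
    using mem_sphere_iff_eq_upper_arc[OF c] above
    by (cases c) (simp add: y dist_Pair_Pair dist_real_def X_def power2_commute)
  have "upper_arc t c' x < y \<longleftrightarrow> (x, y) \<notin> cball c' 1"
    using mem_cball_iff_le_upper_arc[OF c'] above by (auto simp: y_def)
  also have "\<dots> \<longleftrightarrow> 1 < (X + (fst c - fst c'))\<^sup>2 + (s + (snd c - snd c'))\<^sup>2"
    by (cases c') (auto simp: y dist_Pair_Pair dist_real_def X_def power2_commute algebra_simps)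
  also have "(X + (fst c - fst c'))\<^sup>2 + (s + (snd c - snd c'))\<^sup>2
      = X\<^sup>2 + s\<^sup>2 - 2 * ((fst c' - fst c) * X + (snd c' - snd c) * s)
        + ((fst c' - fst c)\<^sup>2 + (snd c' - snd c)\<^sup>2)"
    by (simp add: power2_eq_square algebra_simps)
  finally show ?thesis using circle by (auto simp: y_def X_def s_def)
qed

lemma convex_upper_arc_dominance:
  assumes a: "\<bar>fst c' - fst c\<bar> \<le> 1/2" and c: "t - 1/2 \<le> snd c" "snd c \<le> t" and c': "snd c' \<le> t"
  shows "convex {x. t < upper_arc t c x \<and> upper_arc t c' x < upper_arc t c x}"
proof -
  let ?S = "{X. \<bar>X\<bar> < sqrt (1 - (t - snd c)\<^sup>2) \<and>
    2 * ((fst c' - fst c) * X + (snd c' - snd c) * sqrt (1 - X\<^sup>2))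
      < (fst c' - fst c)\<^sup>2 + (snd c' - snd c)\<^sup>2}"
  have "convex ?S" using assms by (intro convex_arc_separation) auto
  moreover have "{x. t < upper_arc t c x \<and> upper_arc t c' x < upper_arc t c x} = (+) (fst c) ` ?S"
  proof -
    have "x \<in> {x. t < upper_arc t c x \<and> upper_arc t c' x < upper_arc t c x} \<longleftrightarrow> x - fst c \<in> ?S" for x
      using upper_arc_gt_iff[OF c(2)] upper_arc_less_upper_arc_iff[OF c(2) c'] by auto
    then show ?thesis by (force simp: image_iff algebra_simps)
  qed
  ultimately show ?thesis by simp
qed

primrec envelope :: "real \<Rightarrow> (nat \<Rightarrow> real \<times> real) \<Rightarrow> nat \<Rightarrow> real \<Rightarrow> real" where
  "envelope t u 0 x = t"
| "envelope t u (Suc k) x = max (envelope t u k x) (upper_arc t (u (Suc k)) x)"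

definition exposed :: "real \<Rightarrow> (nat \<Rightarrow> real \<times> real) \<Rightarrow> nat \<Rightarrow> real set" where
  "exposed t u i = {x. envelope t u (i - 1) x < upper_arc t (u i) x}"

definition labeled_region :: "real \<Rightarrow> (nat \<Rightarrow> real \<times> real) \<Rightarrow> nat \<Rightarrow> (real \<times> real) set" where
  "labeled_region t u i =
     {p. envelope t u (i - 1) (fst p) < snd p \<and> snd p \<le> envelope t u i (fst p)}"

text \<open>The only candidates for vertices: the points of the previous envelope above the two ends
  of the interval \<open>exposed t u k\<close> on which the \<open>k\<close>-th arc shows.\<close>
definition breakpoints :: "real \<Rightarrow> (nat \<Rightarrow> real \<times> real) \<Rightarrow> nat \<Rightarrow> (real \<times> real) set" where
  "breakpoints t u N = (\<Union>k\<in>{1..N}.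
     (\<lambda>x. (x, envelope t u (k - 1) x)) ` {Inf (exposed t u k), Sup (exposed t u k)})"

text \<open>The part of the graph of the \<open>j\<close>-th envelope that no earlier envelope contains; these
  strands partition the skeleton.\<close>
definition strand :: "real \<Rightarrow> (nat \<Rightarrow> real \<times> real) \<Rightarrow> nat \<Rightarrow> (real \<times> real) set" where
  "strand t u j = (\<lambda>x. (x, envelope t u j x)) ` {x. j = 0 \<or> x \<in> exposed t u j}"

lemma envelope_ge: "t \<le> envelope t u k x"
  by (induction k) auto

lemma envelope_mono: "k \<le> m \<Longrightarrow> envelope t u k x \<le> envelope t u m x"
  by (rule lift_Suc_mono_le[of "\<lambda>k. envelope t u k x"]) auto

lemma continuous_on_envelope [continuous_intros]:
  "continuous_on S f \<Longrightarrow> continuous_on S (\<lambda>x. envelope t u k (f x))"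
  by (induction k) (auto intro!: continuous_intros)

lemma continuous_on_envelope_UNIV: "continuous_on UNIV (envelope t u k)"
  using continuous_on_envelope[OF continuous_on_id] by simp

lemma envelope_less_iff: "envelope t u k x < y \<longleftrightarrow> t < y \<and> (\<forall>j\<in>{1..k}. upper_arc t (u j) x < y)"
  by (induction k) (auto simp: atLeastAtMostSuc_conv)

lemma envelope_eq_if_exposed:
  assumes "0 < i"
  shows "envelope t u i x =
    (if x \<in> exposed t u i then upper_arc t (u i) x else envelope t u (i - 1) x)"
  using assms by (cases i) (auto simp: exposed_def)

lemma envelope_prev_less_iff:
  "0 < i \<Longrightarrow> envelope t u (i - 1) x < envelope t u i x \<longleftrightarrow> x \<in> exposed t u i"
  by (cases i) (auto simp: exposed_def)

lemma envelope_less_if_exposed: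
  assumes "j < k" "x \<in> exposed t u k"
  shows "envelope t u j x < envelope t u k x"
proof -
  have "envelope t u j x \<le> envelope t u (k - 1) x" using assms(1) by (intro envelope_mono) simp
  also have "\<dots> < envelope t u k x" using assms envelope_prev_less_iff[of k t u x] by simp
  finally show ?thesis .
qed

lemma Least_envelope_eq:
  assumes "envelope t u k x = y"
  defines "m \<equiv> LEAST j. envelope t u j x = y"
  shows "m \<le> k" "envelope t u m x = y" "m \<noteq> 0 \<Longrightarrow> x \<in> exposed t u m"
proof -
  show "m \<le> k" unfolding m_def using assms(1) by (rule Least_le)
  show eq: "envelope t u m x = y" unfolding m_def using assms(1) by (rule LeastI)
  assume "m \<noteq> 0"
  then have "envelope t u (m - 1) x \<noteq> y"
    using not_less_Least[of "m - 1" "\<lambda>j. envelope t u j x = y"] by (simp add: m_def)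
  moreover have "envelope t u (m - 1) x \<le> envelope t u m x" by (rule envelope_mono) simp
  ultimately have "envelope t u (m - 1) x < envelope t u m x" using eq by simp
  then show "x \<in> exposed t u m" using envelope_prev_less_iff[of m] \<open>m \<noteq> 0\<close> by simp
qed

lemma open_exposed: "open (exposed t u i)"
  unfolding exposed_def by (intro open_Collect_less continuous_intros)

lemma eventually_envelope_eq_prev:
  assumes "0 < i" "x0 \<notin> closure (exposed t u i)"
  shows "\<forall>\<^sub>F x in nhds x0. envelope t u i x = envelope t u (i - 1) x"
proof -
  have "\<forall>\<^sub>F x in nhds x0. x \<in> - closure (exposed t u i)"
    using assms(2) by (intro eventually_nhds_in_open) auto
  then show ?thesis
    by eventually_elim (use assms(1) closure_subset envelope_eq_if_exposed in fastforce)
qed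

lemma connected_labeled_region:
  assumes "0 < i" "connected (exposed t u i)"
  shows "connected (labeled_region t u i)"
  unfolding labeled_region_def
  using assms envelope_prev_less_iff[OF assms(1)]
  by (intro connected_region_between_graphs continuous_on_envelope_UNIV) simp

lemma frontier_labeled_region:
  "frontier (labeled_region t u i)
     \<subseteq> {p. snd p = envelope t u (i - 1) (fst p)} \<union> {p. snd p = envelope t u i (fst p)}"
  unfolding labeled_region_def by (intro frontier_region_between_graphs continuous_on_envelope_UNIV)

lemma finite_breakpoints: "finite (breakpoints t u N)"
  by (simp add: breakpoints_def)

lemma card_breakpoints_le: "card (breakpoints t u N) \<le> 2 * N"
proof -
  let ?B = "\<lambda>k. (\<lambda>x. (x, envelope t u (k - 1) x)) ` {Inf (exposed t u k), Sup (exposed t u k)}"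
  have "card (breakpoints t u N) \<le> (\<Sum>k\<in>{1..N}. card (?B k))"
    unfolding breakpoints_def by (rule card_UN_le) simp
  also have "\<dots> \<le> (\<Sum>k\<in>{1..N}. 2)"
    by (intro sum_mono order_trans[OF card_image_le]) (auto simp: card_insert_if)
  finally show ?thesis by simp
qed

lemma disjoint_strands: "j \<noteq> k \<Longrightarrow> strand t u j \<inter> strand t u k = {}"
  by (auto simp: strand_def dest: envelope_less_if_exposed dest!: neq_iff[THEN iffD1])

section \<open>Faces\<close>

locale disk_arrangement =
  fixes t :: real and u :: "nat \<Rightarrow> real \<times> real" and N :: nat and a :: real
  assumes centre_fst: "i \<in> {1..N} \<Longrightarrow> a \<le> fst (u i) \<and> fst (u i) \<le> a + 1/2"
    and centre_snd: "i \<in> {1..N} \<Longrightarrow> t - 1/2 \<le> snd (u i) \<and> snd (u i) \<le> t"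
begin

lemma mem_Union_cball_iff:
  assumes "k \<le> N" "t < y"
  shows "(x, y) \<in> (\<Union>j\<in>{1..k}. cball (u j) 1) \<longleftrightarrow> y \<le> envelope t u k x"
  using assms
proof (induction k)
  case (Suc k)
  then have "(x, y) \<in> cball (u (Suc k)) 1 \<longleftrightarrow> y \<le> upper_arc t (u (Suc k)) x"
    using centre_snd[of "Suc k"] by (intro mem_cball_iff_le_upper_arc) auto
  then show ?case using Suc by (auto simp: atLeastAtMostSuc_conv)
qed simp

lemma outer_face_eq:
  assumes "k \<le> N"
  shows "outer_face t u k = {p. envelope t u k (fst p) < snd p}"
proof (intro set_eqI)
  fix p :: "real \<times> real"
  obtain x y where p: "p = (x, y)" by (cases p)
  show "p \<in> outer_face t u k \<longleftrightarrow> p \<in> {p. envelope t u k (fst p) < snd p}"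
  proof (cases "t < y")
    case True
    then show ?thesis using mem_Union_cball_iff[OF assms True, of x] p
      by (auto simp: outer_face_def halfplane_def)
  next
    case False
    then show ?thesis using envelope_ge[of t u k x] p
      by (auto simp: outer_face_def halfplane_def)
  qed
qed

lemma outer_face_Int_cball:
  assumes i: "i \<in> {1..N}"
  shows "outer_face t u (i - 1) \<inter> cball (u i) 1 = labeled_region t u i"
proof (intro set_eqI)
  fix p :: "real \<times> real"
  obtain x y where p: "p = (x, y)" by (cases p)
  have "envelope t u (i - 1) x < y \<Longrightarrow> (x, y) \<in> cball (u i) 1 \<longleftrightarrow> y \<le> upper_arc t (u i) x"
    using centre_snd[OF i] envelope_ge[of t u "i - 1" x]
    by (intro mem_cball_iff_le_upper_arc) auto
  moreover have "envelope t u i x = max (envelope t u (i - 1) x) (upper_arc t (u i) x)"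
    using i by (cases i) auto
  ultimately show "p \<in> outer_face t u (i - 1) \<inter> cball (u i) 1 \<longleftrightarrow> p \<in> labeled_region t u i"
    using i p by (auto simp: outer_face_eq labeled_region_def)
qed

lemma exposed_subset_ball:
  assumes "i \<in> {1..N}"
  shows "exposed t u i \<subseteq> ball (fst (u i)) (sqrt (1 - (t - snd (u i))\<^sup>2))"
proof
  fix x assume "x \<in> exposed t u i"
  then have "t < upper_arc t (u i) x"
    using envelope_ge[of t u "i - 1" x] by (simp add: exposed_def)
  then show "x \<in> ball (fst (u i)) (sqrt (1 - (t - snd (u i))\<^sup>2))"
    using upper_arc_gt_iff[of "u i" t x] centre_snd[OF assms]
    by (simp add: dist_real_def abs_minus_commute)
qed

lemma bounded_exposed: "i \<in> {1..N} \<Longrightarrow> bounded (exposed t u i)"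
  using exposed_subset_ball bounded_subset by blast

lemma convex_exposed:
  assumes i: "i \<in> {1..N}"
  shows "convex (exposed t u i)"
proof -
  let ?above = "\<lambda>x. t < upper_arc t (u i) x"
  have eq: "exposed t u i = {x. ?above x} \<inter>
      (\<Inter>j\<in>{1..i - 1}. {x. ?above x \<and> upper_arc t (u j) x < upper_arc t (u i) x})"
    unfolding exposed_def envelope_less_iff by blast
  have "{x. ?above x} = ball (fst (u i)) (sqrt (1 - (t - snd (u i))\<^sup>2))"
    using upper_arc_gt_iff[of "u i" t] centre_snd[OF i]
    by (simp add: set_eq_iff dist_real_def abs_minus_commute)
  then have "convex {x. ?above x}" by simp
  moreover have "convex {x. ?above x \<and> upper_arc t (u j) x < upper_arc t (u i) x}"
    if "j \<in> {1..i - 1}" for j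
  proof (rule convex_upper_arc_dominance)
    have j: "j \<in> {1..N}" using that i by auto
    show "\<bar>fst (u j) - fst (u i)\<bar> \<le> 1/2"
      unfolding abs_le_iff using centre_fst[OF i] centre_fst[OF j] by linarith
    show "t - 1/2 \<le> snd (u i)" "snd (u i) \<le> t" "snd (u j) \<le> t"
      using centre_snd[OF i] centre_snd[OF j] by auto
  qed
  ultimately show ?thesis unfolding eq by (intro convex_Int convex_INT)
qed

lemma labeled_faces_eq:
  assumes "i \<in> {1..N}"
  shows "labeled_faces t u i = (if labeled_region t u i = {} then {} else {labeled_region t u i})"
proof -
  have "connected (labeled_region t u i)"
    using assms convex_exposed by (intro connected_labeled_region convex_connected) auto
  moreover have "labeled_faces t u i = components (labeled_region t u i)"
    by (simp only: labeled_faces_def outer_face_Int_cball[OF assms])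
  ultimately show ?thesis by (simp add: components_eq_sing_iff)
qed

lemma labeled_faces_subset: "i \<in> {1..N} \<Longrightarrow> labeled_faces t u i \<subseteq> {labeled_region t u i}"
  using labeled_faces_eq by simp

lemma faces_subset: "faces t u N \<subseteq> insert (outer_face t u N) (labeled_region t u ` {1..N})"
  unfolding faces_def using labeled_faces_subset by blast

lemma finite_faces: "finite (faces t u N)"
  using faces_subset finite_subset by blast

lemma card_faces_le: "card (faces t u N) \<le> N + 1"
proof -
  have "card (faces t u N) \<le> card (insert (outer_face t u N) (labeled_region t u ` {1..N}))"
    using faces_subset by (intro card_mono) auto
  also have "\<dots> \<le> card (labeled_region t u ` {1..N}) + 1" by (simp add: card_insert_if)
  also have "\<dots> \<le> N + 1" using card_image_le[of "{1..N}" "labeled_region t u"] by simp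
  finally show ?thesis .
qed

lemma frontier_outer_face: "frontier (outer_face t u N) = {p. snd p = envelope t u N (fst p)}"
  by (simp add: outer_face_eq frontier_strict_epigraph continuous_on_envelope_UNIV)

text \<open>By descending induction on \<open>k\<close>: a point of the \<open>k\<close>-th envelope lies on the next envelope
  or on the lower boundary of the next labeled region.\<close>
lemma envelope_graph_subset_skeleton:
  assumes "k \<le> N"
  shows "(x, envelope t u k x) \<in> skeleton t u N"
  using assms
proof (induction rule: inc_induct)
  case base
  have "(x, envelope t u N x) \<in> frontier (outer_face t u N)"
    by (simp add: frontier_outer_face)
  then show ?case unfolding skeleton_def faces_def by blast
next
  case (step n)
  show ?case
  proof (cases "envelope t u n x = envelope t u (Suc n) x")
    case True
    then show ?thesis using step.IH by simp
  next
    case False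
    then have less: "envelope t u n x < envelope t u (Suc n) x"
      using envelope_mono[of n "Suc n" t u x] by simp
    then have frontier: "(x, envelope t u n x) \<in> frontier (labeled_region t u (Suc n))"
      unfolding labeled_region_def using lower_graph_in_frontier[of "envelope t u n"] by simp
    have "(x, envelope t u (Suc n) x) \<in> labeled_region t u (Suc n)"
      using less by (simp add: labeled_region_def)
    then have "labeled_faces t u (Suc n) = {labeled_region t u (Suc n)}"
      using step.hyps labeled_faces_eq[of "Suc n"] by auto
    moreover have "Suc n \<in> {1..N}" using step.hyps by simp
    ultimately have "labeled_region t u (Suc n) \<in> faces t u N"
      unfolding faces_def by blast
    with frontier show ?thesis unfolding skeleton_def by blast
  qed
qed

lemma skeleton_eq: "skeleton t u N = {p. \<exists>k\<le>N. snd p = envelope t u k (fst p)}"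
proof (intro equalityI subsetI)
  fix p assume "p \<in> skeleton t u N"
  then obtain F where "F \<in> faces t u N" "p \<in> frontier F" by (auto simp: skeleton_def)
  then consider "p \<in> frontier (outer_face t u N)"
    | i where "i \<in> {1..N}" "p \<in> frontier (labeled_region t u i)"
    using faces_subset by blast
  then show "p \<in> {p. \<exists>k\<le>N. snd p = envelope t u k (fst p)}"
  proof cases
    case 1
    then show ?thesis by (auto simp: frontier_outer_face)
  next
    case 2
    then have "snd p = envelope t u (i - 1) (fst p) \<or> snd p = envelope t u i (fst p)"
      using frontier_labeled_region[of t u i] by blast
    moreover have "i - 1 \<le> N" "i \<le> N" using 2(1) by auto
    ultimately show ?thesis by blast
  qed
next
  fix p assume "p \<in> {p. \<exists>k\<le>N. snd p = envelope t u k (fst p)}"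
  then obtain k where "k \<le> N" "p = (fst p, envelope t u k (fst p))"
    by (auto simp: prod_eq_iff)
  then show "p \<in> skeleton t u N" using envelope_graph_subset_skeleton by metis
qed

section \<open>Vertices and edges\<close>

lemma eventually_envelope_eq_of_not_breakpoint:
  assumes "(x, y) \<notin> breakpoints t u N" "m \<le> k" "k \<le> N"
    and "envelope t u m x = y" "envelope t u k x = y"
  shows "\<forall>\<^sub>F x' in nhds x. envelope t u k x' = envelope t u m x'"
proof -
  have "\<forall>\<^sub>F x' in nhds x. envelope t u j x' = envelope t u (j - 1) x'" if j: "j \<in> {m<..k}" for j
  proof (rule eventually_envelope_eq_prev)
    show "0 < j" using j by simp
    have jN: "j \<in> {1..N}" using j assms(3) by auto
    have "envelope t u m x \<le> envelope t u (j - 1) x" "envelope t u (j - 1) x \<le> envelope t u j x"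
      "envelope t u j x \<le> envelope t u k x"
      using j by (auto intro: envelope_mono)
    then have prev: "envelope t u (j - 1) x = y" and "envelope t u j x = y"
      using assms(4,5) by linarith+
    then have "x \<notin> exposed t u j" by (simp add: envelope_prev_less_iff[OF \<open>0 < j\<close>, symmetric])
    moreover have "(x, envelope t u (j - 1) x) \<notin> breakpoints t u N" using assms(1) prev by simp
    then have "x \<notin> {Inf (exposed t u j), Sup (exposed t u j)}"
      using jN unfolding breakpoints_def by blast
    ultimately show "x \<notin> closure (exposed t u j)"
      using closure_diff_subset_Inf_Sup[OF convex_exposed[OF jN] bounded_exposed[OF jN]] by blast
  qed
  then have "\<forall>\<^sub>F x' in nhds x. \<forall>j\<in>{m<..k}. envelope t u j x' = envelope t u (j - 1) x'"
    by (simp add: eventually_ball_finite)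
  then show ?thesis
  proof eventually_elim
    case (elim x')
    then show ?case by (intro eq_if_eq_prev[where f = "\<lambda>j. envelope t u j x'", OF \<open>m \<le> k\<close>]) simp
  qed
qed

lemma skeleton_locally_graph:
  assumes p: "(x, y) \<in> skeleton t u N" "(x, y) \<notin> breakpoints t u N"
    and m: "m = (LEAST k. envelope t u k x = y)"
  shows "m \<le> N" "envelope t u m x = y"
    "\<forall>\<^sub>F q in nhds (x, y). q \<in> skeleton t u N \<longleftrightarrow> snd q = envelope t u m (fst q)"
proof -
  obtain k0 where k0: "k0 \<le> N" "envelope t u k0 x = y"
    using p(1) by (auto simp: skeleton_eq)
  have m_le: "m \<le> k" if "envelope t u k x = y" for k
    using Least_envelope_eq(1)[OF that] by (simp add: m)
  show m_eq: "envelope t u m x = y"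
    using Least_envelope_eq(2)[OF k0(2)] by (simp add: m)
  show "m \<le> N" using m_le[OF k0(2)] k0(1) by simp
  have "\<forall>\<^sub>F q in nhds (x, y). snd q = envelope t u k (fst q) \<longrightarrow> snd q = envelope t u m (fst q)"
    if "k \<le> N" for k
  proof (cases "envelope t u k x = y")
    case False
    have "open {q. snd q \<noteq> envelope t u k (fst q)}"
      by (intro open_Collect_neq continuous_intros)
    then have "\<forall>\<^sub>F q in nhds (x, y). q \<in> {q. snd q \<noteq> envelope t u k (fst q)}"
      using False by (intro eventually_nhds_in_open) auto
    then show ?thesis by eventually_elim simp
  next
    case True
    have "\<forall>\<^sub>F x' in nhds x. envelope t u k x' = envelope t u m x'"
      using p(2) m_le[OF True] that m_eq True by (rule eventually_envelope_eq_of_not_breakpoint)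
    then have "\<forall>\<^sub>F q in nhds (x, y). envelope t u k (fst q) = envelope t u m (fst q)"
      using eventually_nhds_fst[of _ "(x, y)"] by simp
    then show ?thesis by eventually_elim simp
  qed
  then have "\<forall>\<^sub>F q in nhds (x, y). \<forall>k\<in>{..N}.
      snd q = envelope t u k (fst q) \<longrightarrow> snd q = envelope t u m (fst q)"
    by (simp add: eventually_ball_finite)
  then show "\<forall>\<^sub>F q in nhds (x, y). q \<in> skeleton t u N \<longleftrightarrow> snd q = envelope t u m (fst q)"
  proof eventually_elim
    case (elim q)
    have "q \<in> skeleton t u N \<longleftrightarrow> (\<exists>k\<le>N. snd q = envelope t u k (fst q))"
      by (simp add: skeleton_eq)
    then show ?case using elim \<open>m \<le> N\<close> by blast
  qed
qed

lemma skeleton_locally_curve: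
  assumes "(x, y) \<in> skeleton t u N" "(x, y) \<notin> breakpoints t u N"
  shows "\<exists>C\<in>curves t u N. \<forall>\<^sub>F q in nhds (x, y). q \<in> skeleton t u N \<longleftrightarrow> q \<in> C"
proof -
  define m where "m = (LEAST k. envelope t u k x = y)"
  note local = skeleton_locally_graph[OF assms m_def]
  show ?thesis
  proof (cases "m = 0")
    case True
    then have "\<forall>\<^sub>F q in nhds (x, y). q \<in> skeleton t u N \<longleftrightarrow> q \<in> topline t"
      using local(3) by (simp add: topline_def)
    then show ?thesis by (auto simp: curves_def)
  next
    case False
    then have mN: "m \<in> {1..N}" using local(1) by simp
    have exposed: "x \<in> exposed t u m"
      using Least_envelope_eq(3)[OF local(2)] False by (simp add: m_def)
    then have "envelope t u (m - 1) x < envelope t u m x"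
      using envelope_prev_less_iff[of m] False by simp
    then have "t < y" using envelope_ge[of t u "m - 1" x] local(2) by linarith
    with exposed have "\<forall>\<^sub>F q in nhds (x, y). q \<in> fst -` exposed t u m \<inter> {q. t < snd q}"
      by (intro eventually_nhds_in_open open_Int open_vimage_fst open_exposed open_Collect_less
          continuous_intros) auto
    then have "\<forall>\<^sub>F q in nhds (x, y). q \<in> skeleton t u N \<longleftrightarrow> q \<in> sphere (u m) 1"
      using local(3)
    proof eventually_elim
      case (elim q)
      then have "envelope t u m (fst q) = upper_arc t (u m) (fst q)"
        using envelope_eq_if_exposed[of m] False by simp
      then show ?case
        using elim mem_sphere_iff_eq_upper_arc[of "u m" t "snd q" "fst q"] centre_snd[OF mN] by simp
    qed
    then show ?thesis using mN by (auto simp: curves_def)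
  qed
qed

lemma vertices_subset_breakpoints: "vertices t u N \<subseteq> breakpoints t u N"
proof
  fix p assume pV: "p \<in> vertices t u N"
  obtain x y where p: "p = (x, y)" by (cases p)
  show "p \<in> breakpoints t u N"
  proof (rule ccontr)
    assume "p \<notin> breakpoints t u N"
    moreover have "p \<in> skeleton t u N" using pV by (simp add: vertices_def)
    ultimately obtain C where C: "C \<in> curves t u N" "\<forall>\<^sub>F q in nhds p. q \<in> skeleton t u N \<longleftrightarrow> q \<in> C"
      using skeleton_locally_curve unfolding p by blast
    from C(2) obtain e where "e > 0" "skeleton t u N \<inter> ball p e = C \<inter> ball p e"
      by (blast dest: eventually_nhds_mem_iff_imp_ball)
    with C(1) show False using pV by (auto simp: vertices_def)
  qed
qed

lemma finite_vertices: "finite (vertices t u N)"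
  using vertices_subset_breakpoints finite_breakpoints finite_subset by blast

lemma card_vertices_le: "card (vertices t u N) \<le> 2 * N"
  using card_mono[OF finite_breakpoints vertices_subset_breakpoints] card_breakpoints_le
  by (rule order_trans)

lemma convex_strand_domain: "j \<le> N \<Longrightarrow> convex {x. j = 0 \<or> x \<in> exposed t u j}"
  using convex_exposed[of j] by (cases "j = 0") simp_all

lemma skeleton_eq_strands: "skeleton t u N = (\<Union>j\<le>N. strand t u j)"
proof (intro equalityI subsetI)
  fix p assume "p \<in> skeleton t u N"
  then obtain k where k: "k \<le> N" "snd p = envelope t u k (fst p)" by (auto simp: skeleton_eq)
  define m where "m = (LEAST j. envelope t u j (fst p) = snd p)"
  note m = Least_envelope_eq[OF k(2)[symmetric], folded m_def]
  then have "fst p \<in> exposed t u m" if "m \<noteq> 0" using that by blast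
  then have "p \<in> strand t u m" using m(2) by (force simp: strand_def prod_eq_iff)
  then show "p \<in> (\<Union>j\<le>N. strand t u j)" using m(1) k(1) by auto
next
  fix p assume "p \<in> (\<Union>j\<le>N. strand t u j)"
  then show "p \<in> skeleton t u N" by (auto simp: strand_def skeleton_eq)
qed

lemma strand_diff_cover:
  assumes "j \<le> N" "finite V"
  obtains \<P> where "finite \<P>" "card \<P> \<le> card (V \<inter> strand t u j) + 1"
    "\<And>P. P \<in> \<P> \<Longrightarrow> connected P" "\<Union>\<P> = strand t u j - V"
proof -
  let ?g = "\<lambda>x. (x, envelope t u j x)"
  let ?D = "{x. j = 0 \<or> x \<in> exposed t u j}"
  let ?X = "fst ` (V \<inter> strand t u j)"
  have "finite ?X" using assms(2) by simp
  then obtain \<J> where J: "finite \<J>" "card \<J> \<le> card ?X + 1" "\<And>J. J \<in> \<J> \<Longrightarrow> convex J" "\<Union>\<J> = ?D - ?X"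
    by (rule convex_diff_finite_cover[OF convex_strand_domain[OF assms(1)]]) blast
  show ?thesis
  proof (rule that[of "(\<lambda>J. ?g ` J) ` \<J>"])
    show "finite ((\<lambda>J. ?g ` J) ` \<J>)" using J(1) by simp
    have "card ?X \<le> card (V \<inter> strand t u j)" using assms(2) by (intro card_image_le) simp
    then show "card ((\<lambda>J. ?g ` J) ` \<J>) \<le> card (V \<inter> strand t u j) + 1"
      using J(2) card_image_le[OF J(1), of "\<lambda>J. ?g ` J"] by linarith
    show "connected P" if P: "P \<in> (\<lambda>J. ?g ` J) ` \<J>" for P
    proof -
      obtain J where "J \<in> \<J>" "P = ?g ` J" using P by blast
      moreover have "continuous_on J ?g" by (intro continuous_intros)
      ultimately show ?thesis using J(3) by (metis connected_continuous_image convex_connected)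
    qed
    have "\<Union>((\<lambda>J. ?g ` J) ` \<J>) = ?g ` (?D - ?X)" by (simp add: J(4) flip: image_Union)
    also have "\<dots> = strand t u j - V" unfolding strand_def by (rule graph_image_diff)
    finally show "\<Union>((\<lambda>J. ?g ` J) ` \<J>) = strand t u j - V" .
  qed
qed

lemma finite_card_edges_le:
  "finite (edges t u N) \<and> card (edges t u N) \<le> card (vertices t u N) + N + 1"
proof -
  let ?V = "vertices t u N"
  have "\<forall>j\<in>{..N}. \<exists>\<P>. finite \<P> \<and> card \<P> \<le> card (?V \<inter> strand t u j) + 1 \<and>
      (\<forall>P\<in>\<P>. connected P) \<and> \<Union>\<P> = strand t u j - ?V"
    by (metis atMost_iff strand_diff_cover finite_vertices)
  then obtain \<P> where P: "\<And>j. j \<le> N \<Longrightarrow> finite (\<P> j) \<and> card (\<P> j) \<le> card (?V \<inter> strand t u j) + 1 \<and>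
      (\<forall>P\<in>\<P> j. connected P) \<and> \<Union>(\<P> j) = strand t u j - ?V"
    by (metis atMost_iff)
  let ?Q = "\<Union>j\<le>N. \<P> j"
  have disjoint: "(\<Sum>j\<le>N. card (?V \<inter> strand t u j)) = card (\<Union>j\<le>N. ?V \<inter> strand t u j)"
    using disjoint_strands
    by (intro card_UN_disjoint[symmetric]) (auto simp: finite_vertices, blast)
  have "card ?Q \<le> (\<Sum>j\<le>N. card (\<P> j))" by (rule card_UN_le) simp
  also have "\<dots> \<le> (\<Sum>j\<le>N. card (?V \<inter> strand t u j) + 1)" using P by (intro sum_mono) simp
  also have "\<dots> = card (\<Union>j\<le>N. ?V \<inter> strand t u j) + (N + 1)"
    by (simp add: sum_Suc disjoint)
  also have "\<dots> \<le> card ?V + (N + 1)"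
    using finite_vertices by (intro add_right_mono card_mono) auto
  finally have "card ?Q \<le> card ?V + N + 1" by simp
  moreover have "finite (edges t u N) \<and> card (edges t u N) \<le> card ?Q"
    unfolding edges_def
  proof (rule card_components_le_cover)
    show "finite ?Q" using P by auto
    have "\<Union>?Q = (\<Union>j\<le>N. \<Union>(\<P> j))" by blast
    also have "\<dots> = (\<Union>j\<le>N. strand t u j - ?V)" using P by simp
    also have "\<dots> = skeleton t u N - ?V" unfolding skeleton_eq_strands by blast
    finally show "\<Union>?Q = skeleton t u N - ?V" .
    show "connected P" if "P \<in> ?Q" for P using that P by auto
  qed
  ultimately show ?thesis by simp
qed

lemma complexity_le: "complexity t u N \<le> 6 * N + 2"
  using card_faces_le card_vertices_le finite_card_edges_le by (simp add: complexity_def)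

end

theorem corollary1:
  "\<exists>C::real. \<forall>(a::real) (b::real) (N::nat) (u::nat \<Rightarrow> real \<times> real).
     (\<forall>i\<in>{1..N}. u i \<in> sq a b) \<longrightarrow>
       ((N \<ge> 1 \<longrightarrow>
           finite (faces (b + 1/2) u N) \<and> finite (vertices (b + 1/2) u N) \<and>
           finite (edges (b + 1/2) u N) \<and>
           real (complexity (b + 1/2) u N) \<le> C * real N) \<and>
        (\<forall>i\<in>{1..N}. \<forall>A\<in>labeled_faces (b + 1/2) u i. \<forall>B\<in>labeled_faces (b + 1/2) u i. A = B))"
proof (intro exI[of _ 8] allI impI)
  fix a b :: real and N :: nat and u :: "nat \<Rightarrow> real \<times> real"
  assume "\<forall>i\<in>{1..N}. u i \<in> sq a b"
  then interpret disk_arrangement "b + 1/2" u N a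
    by unfold_locales (auto simp: sq_def)
  have "real (complexity (b + 1/2) u N) \<le> 8 * real N" if "N \<ge> 1"
    using complexity_le that by linarith
  then show "(N \<ge> 1 \<longrightarrow>
           finite (faces (b + 1/2) u N) \<and> finite (vertices (b + 1/2) u N) \<and>
           finite (edges (b + 1/2) u N) \<and>
           real (complexity (b + 1/2) u N) \<le> 8 * real N) \<and>
        (\<forall>i\<in>{1..N}. \<forall>A\<in>labeled_faces (b + 1/2) u i. \<forall>B\<in>labeled_faces (b + 1/2) u i. A = B)"
    using finite_faces finite_vertices finite_card_edges_le labeled_faces_subset by blast
qed

end
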